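(* Let $\rho=(\rho_1,\dots,\rho_s)$ be a composition of $n$ with exactly $r$ nonzero entries. Then: (a) There are exactly $r$ boxes of $\rho$ which can contain $n$ in a row-strict filling of $\rho$ (namely, the far-right boxes of the nonzero rows, each of which does occur). (b) If $T$ is a row-strict filling of $\rho$ and $n$ lies in the far-right box whose dimension-order label is $i\in\{1,\dots,r\}$, then $|D^T_n|=i-1$.
   Context: A composition $\rho=(\rho_1,\dots,\rho_s)$ of $n$ is a finite sequence of nonnegative integers summing to $n$; its diagram has $\rho_i$ boxes in row $i$ (rows numbered top to bottom) in columns $1,\dots,\rho_i$ (columns numbered left to right). A filling places $1,\dots,n$ bijectively into the boxes; it is row-strict if entries increase left to right in each row. Dimension-ordering: the far-right box of each nonzero row $i$ (the box in column $\rho_i$) gets a label in $\{1,\dots,r\}$ by ordering these $r$ boxes first by column, from the rightmost column to the leftmost, and within a single column from top to bottom; the $k$-th box in this order gets label $k$. Dimension pairs (with Hessenberg function $h(j)=j$): for a filling $T$, a pair $(a,b)$ of entries is a dimension pair if (1) $b>a$; (2) either $b$ lies in the same column as $a$ strictly below it, or $b$ lies in a column strictly to the left of the column of $a$; (3) if there is a box immediately to the right of $a$ in its row, containing $c$, then $b\le c$. For $j\in\{2,\dots,n\}$, $D^T_j$ denotes the set of dimension pairs of $T$ of the form $(a,j)$. *)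

theory Defs
  imports Main
begin

text \<open>A composition is a list of naturals; rows and columns are numbered from 1.
  A box is a pair (row, column).\<close>

definition boxes :: "nat list \<Rightarrow> (nat \<times> nat) set" where
  "boxes \<rho> = {(i, j). 1 \<le> i \<and> i \<le> length \<rho> \<and> 1 \<le> j \<and> j \<le> \<rho> ! (i - 1)}"

definition row_strict_filling :: "nat list \<Rightarrow> (nat \<times> nat \<Rightarrow> nat) \<Rightarrow> bool" where
  "row_strict_filling \<rho> T \<longleftrightarrow>
     bij_betw T (boxes \<rho>) {1..sum_list \<rho>} \<and>
     (\<forall>i j j'. (i, j) \<in> boxes \<rho> \<longrightarrow> (i, j') \<in> boxes \<rho> \<longrightarrow> j < j' \<longrightarrow> T (i, j) < T (i, j'))"

definition far_right :: "nat list \<Rightarrow> (nat \<times> nat) set" where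
  "far_right \<rho> = {(i, \<rho> ! (i - 1)) | i. 1 \<le> i \<and> i \<le> length \<rho> \<and> \<rho> ! (i - 1) \<noteq> 0}"

text \<open>Dimension-ordering label: order by column from right to left, within a column
  from top to bottom; the k-th box gets label k.\<close>
definition dim_label :: "nat list \<Rightarrow> nat \<times> nat \<Rightarrow> nat" where
  "dim_label \<rho> p = 1 + card {q \<in> far_right \<rho>. snd q > snd p \<or> (snd q = snd p \<and> fst q < fst p)}"

text \<open>Dimension pair (a, b) of filling T (Hessenberg function h(j) = j), given
  by the boxes p (containing a) and q (containing b).\<close>
definition dim_pair_boxes :: "nat list \<Rightarrow> (nat \<times> nat \<Rightarrow> nat) \<Rightarrow> nat \<times> nat \<Rightarrow> nat \<times> nat \<Rightarrow> bool" where
  "dim_pair_boxes \<rho> T p q \<longleftrightarrow>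
     p \<in> boxes \<rho> \<and> q \<in> boxes \<rho> \<and> T q > T p \<and>
     ((snd q = snd p \<and> fst q > fst p) \<or> snd q < snd p) \<and>
     ((fst p, snd p + 1) \<in> boxes \<rho> \<longrightarrow> T q \<le> T (fst p, snd p + 1))"

definition dim_pair :: "nat list \<Rightarrow> (nat \<times> nat \<Rightarrow> nat) \<Rightarrow> nat \<Rightarrow> nat \<Rightarrow> bool" where
  "dim_pair \<rho> T a b \<longleftrightarrow> (\<exists>p q. T p = a \<and> T q = b \<and> dim_pair_boxes \<rho> T p q)"

definition D :: "nat list \<Rightarrow> (nat \<times> nat \<Rightarrow> nat) \<Rightarrow> nat \<Rightarrow> (nat \<times> nat) set" where
  "D \<rho> T j = {(a, j) | a. dim_pair \<rho> T a j}"

end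

theory Submission imports Defs begin

(* Proof idea.
   (a) In a row-strict filling every entry other than n has a larger entry to its right,
       so the box holding n has no right neighbour, i.e. it is a far-right box.
       Conversely, for a far-right box p take the reading filling (boxes numbered row by
       row, left to right) and move the value of p to n, shifting larger values down by
       one; this keeps every row increasing because p is last in its row.  Hence |D^T_n| is the number of boxes preceding p, which is
       dim_label p - 1 by definition of the label. *)

lemma far_right_iff:
  "p \<in> far_right \<rho> \<longleftrightarrow> p \<in> boxes \<rho> \<and> (fst p, snd p + 1) \<notin> boxes \<rho>"
  by (cases p) (auto simp: boxes_def far_right_def)

lemma far_right_subset_boxes: "far_right \<rho> \<subseteq> boxes \<rho>"
  using far_right_iff by blast

lemma far_right_image:
  "far_right \<rho> = (\<lambda>i. (i, \<rho> ! (i - 1))) ` {i \<in> {1..length \<rho>}. \<rho> ! (i - 1) \<noteq> 0}"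
  by (auto simp: far_right_def)

lemma finite_far_right: "finite (far_right \<rho>)"
  by (simp add: far_right_image)

lemma card_far_right: "card (far_right \<rho>) = length (filter (\<lambda>x. x \<noteq> 0) \<rho>)"
proof -
  have "card (far_right \<rho>) = card {i \<in> {1..length \<rho>}. \<rho> ! (i - 1) \<noteq> 0}"
    unfolding far_right_image by (rule card_image) (auto simp: inj_on_def)
  also have "{i \<in> {1..length \<rho>}. \<rho> ! (i - 1) \<noteq> 0} = Suc ` {i. i < length \<rho> \<and> \<rho> ! i \<noteq> 0}"
  proof (intro equalityI subsetI)
    fix x assume "x \<in> {i \<in> {1..length \<rho>}. \<rho> ! (i - 1) \<noteq> 0}"
    then show "x \<in> Suc ` {i. i < length \<rho> \<and> \<rho> ! i \<noteq> 0}"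
      by (intro image_eqI[of x Suc "x - 1"]) auto
  qed auto
  also have "card \<dots> = card {i. i < length \<rho> \<and> \<rho> ! i \<noteq> 0}"
    by (rule card_image) auto
  finally show ?thesis by (simp add: length_filter_conv_card)
qed

lemma filling_inj: "row_strict_filling \<rho> T \<Longrightarrow> inj_on T (boxes \<rho>)"
  by (simp add: row_strict_filling_def bij_betw_def)

lemma filling_le_sum: "row_strict_filling \<rho> T \<Longrightarrow> p \<in> boxes \<rho> \<Longrightarrow> T p \<le> sum_list \<rho>"
  by (auto simp: row_strict_filling_def bij_betw_def)

text \<open>The box holding the largest entry of a row-strict filling is far-right,
  since the entry to its right would be even larger.\<close>
lemma filling_max_far_right:
  assumes T: "row_strict_filling \<rho> T" and p: "p \<in> boxes \<rho>" and Tp: "T p = sum_list \<rho>"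
  shows "p \<in> far_right \<rho>"
proof -
  have "(fst p, snd p + 1) \<notin> boxes \<rho>"
  proof
    assume next_box: "(fst p, snd p + 1) \<in> boxes \<rho>"
    have "T (fst p, snd p) < T (fst p, snd p + 1)"
      using T p next_box unfolding row_strict_filling_def by (metis less_add_one prod.collapse)
    with filling_le_sum[OF T next_box] Tp show False by simp
  qed
  with p show ?thesis by (simp add: far_right_iff)
qed

definition reading_filling :: "nat list \<Rightarrow> nat \<times> nat \<Rightarrow> nat" where
  "reading_filling \<rho> p = sum_list (take (fst p - 1) \<rho>) + snd p"

lemma prefix_sum_mono: "i \<le> k \<Longrightarrow> sum_list (take i (\<rho>::nat list)) \<le> sum_list (take k \<rho>)"
  by (metis append_take_drop_id le_add1 min.absorb1 sum_list_append take_take)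

lemma prefix_sum_step:
  "1 \<le> i \<Longrightarrow> i \<le> length \<rho> \<Longrightarrow>
   sum_list (take i (\<rho>::nat list)) = sum_list (take (i - 1) \<rho>) + \<rho> ! (i - 1)"
  by (cases i) (simp_all add: take_Suc_conv_app_nth)

lemma reading_filling_bounds:
  assumes "(i, j) \<in> boxes \<rho>"
  shows "sum_list (take (i - 1) \<rho>) < reading_filling \<rho> (i, j)"
    and "reading_filling \<rho> (i, j) \<le> sum_list (take i \<rho>)"
  using assms prefix_sum_step[of i \<rho>] by (auto simp: reading_filling_def boxes_def)

lemma reading_filling_inj: "inj_on (reading_filling \<rho>) (boxes \<rho>)"
proof -
  have row_lt: "reading_filling \<rho> (i, j) < reading_filling \<rho> (i', j')"
    if "(i, j) \<in> boxes \<rho>" "(i', j') \<in> boxes \<rho>" "i < i'" for i j i' j'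
    using reading_filling_bounds[OF that(1)] reading_filling_bounds[OF that(2)]
      prefix_sum_mono[of i "i' - 1" \<rho>] that(3) by linarith
  show ?thesis
  proof (rule inj_onI, clarify)
    fix i j i' j'
    assume "(i, j) \<in> boxes \<rho>" "(i', j') \<in> boxes \<rho>"
      and eq: "reading_filling \<rho> (i, j) = reading_filling \<rho> (i', j')"
    then have "i = i'" using row_lt[of i j i' j'] row_lt[of i' j' i j] by (metis less_irrefl nat_neq_iff)
    then show "i = i' \<and> j = j'" using eq by (simp add: reading_filling_def)
  qed
qed

lemma reading_filling_range:
  "p \<in> boxes \<rho> \<Longrightarrow> reading_filling \<rho> p \<in> {1..sum_list \<rho>}"
  using reading_filling_bounds[of "fst p" "snd p" \<rho>]
    prefix_sum_mono[of "fst p" "length \<rho>" \<rho>] by (auto simp: boxes_def)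

text \<open>Every value v is hit: it lies in the first row i whose prefix sum reaches v.\<close>
lemma reading_filling_onto:
  assumes v: "v \<in> {1..sum_list \<rho>}"
  shows "v \<in> reading_filling \<rho> ` boxes \<rho>"
proof -
  let ?P = "\<lambda>i. v \<le> sum_list (take i \<rho>)"
  define i where "i = (LEAST i. ?P i)"
  have total: "?P (length \<rho>)" using v by simp
  have reached: "?P i" unfolding i_def by (rule LeastI[of ?P, OF total])
  have i_le: "i \<le> length \<rho>" unfolding i_def by (rule Least_le[of ?P, OF total])
  have i_pos: "i \<noteq> 0" using reached v by (cases i) auto
  have not_before: "\<not> ?P (i - 1)"
    using not_less_Least[of "i - 1" ?P] i_pos unfolding i_def by auto
  define j where "j = v - sum_list (take (i - 1) \<rho>)"
  have "(i, j) \<in> boxes \<rho>"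
    using i_pos i_le reached not_before prefix_sum_step[of i \<rho>] by (auto simp: boxes_def j_def)
  moreover have "reading_filling \<rho> (i, j) = v"
    using not_before by (simp add: reading_filling_def j_def)
  ultimately show ?thesis by force
qed

lemma reading_filling_bij: "bij_betw (reading_filling \<rho>) (boxes \<rho>) {1..sum_list \<rho>}"
  unfolding bij_betw_def
  using reading_filling_inj reading_filling_range reading_filling_onto by blast

definition move_to_top :: "nat \<Rightarrow> nat \<Rightarrow> nat \<Rightarrow> nat" where
  "move_to_top n m v = (if v = m then n else if v > m then v - 1 else v)"

lemma move_to_top_bij: "m \<in> {1..n} \<Longrightarrow> bij_betw (move_to_top n m) {1..n} {1..n}"
  by (rule bij_betw_byWitness[where f' = "\<lambda>w. if w = n then m else if w \<ge> m then w + 1 else w"])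
    (auto simp: move_to_top_def simp del: One_nat_def)

text \<open>Part (a), existence: every far-right box can hold n.  Moving the reading-filling value
  of p to the top preserves row-strictness, since p is the last box of its row.\<close>
lemma filling_with_max_at:
  assumes p: "p \<in> far_right \<rho>"
  shows "\<exists>T. row_strict_filling \<rho> T \<and> T p = sum_list \<rho>"
proof -
  let ?n = "sum_list \<rho>" and ?R = "reading_filling \<rho>"
  have p_box: "p \<in> boxes \<rho>" using p far_right_subset_boxes by blast
  define T where "T = move_to_top ?n (?R p) \<circ> ?R"
  have bij: "bij_betw T (boxes \<rho>) {1..?n}"
    unfolding T_def using reading_filling_bij move_to_top_bij[OF reading_filling_range[OF p_box]]
    by (rule bij_betw_trans)
  have "T (i, j) < T (i, j')" if box: "(i, j) \<in> boxes \<rho>" "(i, j') \<in> boxes \<rho>" and "j < j'"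
    for i j j'
  proof -
    have "(i, j) \<noteq> p" using p box \<open>j < j'\<close> by (auto simp: far_right_iff boxes_def)
    then have "?R (i, j) \<noteq> ?R p" using inj_onD[OF reading_filling_inj _ box(1) p_box] by blast
    moreover have "?R (i, j) < ?R (i, j')" using \<open>j < j'\<close> by (simp add: reading_filling_def)
    moreover have "?R (i, j') \<le> ?n" using reading_filling_range[OF box(2)] by simp
    ultimately show ?thesis by (auto simp: T_def move_to_top_def)
  qed
  moreover have "T p = ?n" by (simp add: T_def move_to_top_def)
  ultimately show ?thesis using bij unfolding row_strict_filling_def by blast
qed

definition preceding :: "nat list \<Rightarrow> nat \<times> nat \<Rightarrow> (nat \<times> nat) set" where
  "preceding \<rho> p = {q \<in> far_right \<rho>. snd q > snd p \<or> (snd q = snd p \<and> fst q < fst p)}"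

lemma dim_label_preceding: "dim_label \<rho> p = 1 + card (preceding \<rho> p)"
  by (simp add: dim_label_def preceding_def)

lemma dim_label_bounds:
  assumes "p \<in> far_right \<rho>"
  shows "dim_label \<rho> p \<in> {1..card (far_right \<rho>)}"
proof -
  have "preceding \<rho> p \<subseteq> far_right \<rho> - {p}" by (auto simp: preceding_def)
  then have "card (preceding \<rho> p) \<le> card (far_right \<rho>) - 1"
    using card_mono[OF _ \<open>preceding \<rho> p \<subseteq> _\<close>] assms finite_far_right by fastforce
  moreover have "card (far_right \<rho>) \<ge> 1"
    using assms finite_far_right by (metis One_nat_def Suc_leI card_gt_0_iff empty_iff)
  ultimately show ?thesis by (simp add: dim_label_preceding)
qed

text \<open>If n sits in the far-right box p, the dimension pairs (a, n) are exactly those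
  with a in a far-right box preceding p: a right neighbour of the box of a would have to
  hold a value at least n, i.e. be p itself, which the position condition excludes.\<close>
lemma D_max_eq:
  assumes T: "row_strict_filling \<rho> T" and p: "p \<in> far_right \<rho>" and Tp: "T p = sum_list \<rho>"
  shows "D \<rho> T (sum_list \<rho>) = (\<lambda>q. (T q, sum_list \<rho>)) ` preceding \<rho> p"
proof (intro equalityI subsetI)
  let ?n = "sum_list \<rho>"
  have p_box: "p \<in> boxes \<rho>" using p far_right_subset_boxes by blast
  have holds_max: "q = p" if "q \<in> boxes \<rho>" "T q = ?n" for q
    using inj_onD[OF filling_inj[OF T]] that p_box Tp by metis
  fix x
  {
    assume "x \<in> D \<rho> T ?n"
    then obtain p' q where x: "x = (T p', ?n)" and Tq: "T q = ?n" and pair: "dim_pair_boxes \<rho> T p' q"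
      by (auto simp: D_def dim_pair_def)
    have "q = p" using holds_max Tq pair by (auto simp: dim_pair_boxes_def)
    then have position: "snd p' > snd p \<or> (snd p' = snd p \<and> fst p' < fst p)"
      and right: "(fst p', snd p' + 1) \<in> boxes \<rho> \<Longrightarrow> ?n \<le> T (fst p', snd p' + 1)"
      using pair Tq by (auto simp: dim_pair_boxes_def)
    have "(fst p', snd p' + 1) \<notin> boxes \<rho>"
    proof
      assume next_box: "(fst p', snd p' + 1) \<in> boxes \<rho>"
      then have "(fst p', snd p' + 1) = p"
        using holds_max right filling_le_sum[OF T] by (meson le_antisym)
      with position show False by auto
    qed
    then have "p' \<in> preceding \<rho> p"
      using pair position by (auto simp: preceding_def far_right_iff dim_pair_boxes_def)
    then show "x \<in> (\<lambda>q. (T q, ?n)) ` preceding \<rho> p" using x by blast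
  next
    assume "x \<in> (\<lambda>q. (T q, ?n)) ` preceding \<rho> p"
    then obtain p' where x: "x = (T p', ?n)" and p': "p' \<in> far_right \<rho>"
      and position: "snd p' > snd p \<or> (snd p' = snd p \<and> fst p' < fst p)"
      by (auto simp: preceding_def)
    have p'_box: "p' \<in> boxes \<rho>" using p' far_right_subset_boxes by blast
    have "p' \<noteq> p" using position by auto
    then have "T p' < ?n" using holds_max[OF p'_box] filling_le_sum[OF T p'_box] by fastforce
    then have "dim_pair_boxes \<rho> T p' p"
      using p'_box p_box Tp position p' by (auto simp: dim_pair_boxes_def far_right_iff)
    then have "dim_pair \<rho> T (T p') ?n" using Tp unfolding dim_pair_def by blast
    then show "x \<in> D \<rho> T ?n" using x by (simp add: D_def)
  }
qed

lemma card_D_max: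
  assumes T: "row_strict_filling \<rho> T" and p: "p \<in> far_right \<rho>" and Tp: "T p = sum_list \<rho>"
  shows "card (D \<rho> T (sum_list \<rho>)) = dim_label \<rho> p - 1"
proof -
  have "inj_on (\<lambda>q. (T q, sum_list \<rho>)) (preceding \<rho> p)"
    using filling_inj[OF T] far_right_subset_boxes
    by (auto simp: inj_on_def preceding_def)
  then show ?thesis
    using D_max_eq[OF assms] by (simp add: card_image dim_label_preceding)
qed

theorem mainTheorem2:
  fixes \<rho> :: "nat list" and n r :: nat
  assumes "sum_list \<rho> = n"
    and "r = length (filter (\<lambda>x. x \<noteq> 0) \<rho>)"
  shows "{p \<in> boxes \<rho>. \<exists>T. row_strict_filling \<rho> T \<and> T p = n} = far_right \<rho>
       \<and> card (far_right \<rho>) = r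
       \<and> (\<forall>T p. row_strict_filling \<rho> T \<and> p \<in> far_right \<rho> \<and> T p = n
              \<longrightarrow> dim_label \<rho> p \<in> {1..r} \<and> card (D \<rho> T n) = dim_label \<rho> p - 1)"
proof -
  have card_r: "card (far_right \<rho>) = r" using card_far_right assms(2) by simp
  have "{p \<in> boxes \<rho>. \<exists>T. row_strict_filling \<rho> T \<and> T p = n} = far_right \<rho>"
    using filling_max_far_right filling_with_max_at far_right_subset_boxes
    unfolding assms(1)[symmetric] by blast
  moreover have "dim_label \<rho> p \<in> {1..r} \<and> card (D \<rho> T n) = dim_label \<rho> p - 1"
    if "row_strict_filling \<rho> T" "p \<in> far_right \<rho>" "T p = n" for T p
    using dim_label_bounds[OF that(2)] card_D_max[OF that[unfolded assms(1)[symmetric]]]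
      card_r assms(1) by simp
  ultimately show ?thesis using card_r by blast
qed

end
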